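(* Let $\mathcal{N}$ be an exact category, let $k\ge 1$, and let $\mathbb{P}=(P_*,d,d')$ be a binary acyclic complex in $\mathcal{N}$ supported on $[0,k]$. Let $\mathrm{sw}(\mathbb{P})=(P_*,d',d)$ be the binary acyclic complex obtained by switching top and bottom differential. Then $\mathrm{sw}(\mathbb{P})=-\mathbb{P}$ in $L_1^k(\mathcal{N})$.
   Context: A binary acyclic complex $\mathbb{P}=(P_*,d,d')$ in $\mathcal{N}$ is a graded object $P_*$ of $\mathcal{N}$ supported on a finite subset of $[0,\infty)$, together with two degree $-1$ maps $d,d'$ (top and bottom differentials) such that both $\mathbb{P}^\top=(P_*,d)$ and $\mathbb{P}^\bot=(P_*,d')$ are acyclic chain complexes (each differential $P_n\to P_{n-1}$ factors as an admissible epimorphism $P_n\twoheadrightarrow J_{n-1}$ followed by an admissible monomorphism $J_{n-1}\rightarrowtail P_{n-1}$ with $J_n\rightarrowtail P_n\twoheadrightarrow J_{n-1}$ short exact for all $n$). It is diagonal if $d=d'$. Morphisms are degree-$0$ maps that are chain maps for both differentials; with degreewise short exact sequences these form an exact category. For $k\ge0$, $B_1^k(\mathcal{N})$ is the Grothendieck group of the exact category of binary acyclic complexes supported on $[0,k]$, and $K_1^k(\mathcal{N})$ is its quotient by classes of diagonal complexes. For isomorphisms $\alpha,\beta\colon P\to Q$, $\langle\alpha,\beta\rangle$ is the class of the binary complex with $P$ in degree $1$, $Q$ in degree $0$, top differential $\alpha$, bottom differential $\beta$. A binary ladder is $(\mathbb{P},\mathbb{Q},\sigma,\tau)$ with $\sigma\colon\mathbb{P}^\top\to\mathbb{Q}^\top$,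 $\tau\colon\mathbb{P}^\bot\to\mathbb{Q}^\bot$ chain isomorphisms. For $k\ge1$, $L_1^k(\mathcal{N})$ is the quotient of $K_1^k(\mathcal{N})$ by the relations $\mathbb{Q}-\mathbb{P}=\sum_{i=0}^k(-1)^i\langle\sigma_i,\tau_i\rangle$ for all binary ladders with $\mathbb{P},\mathbb{Q}$ supported on $[0,k]$, $P_i=Q_i$ for all $i$, and all $\sigma_i,\tau_i$ involutions. *)

theory Defs
  imports Main
begin

text \<open>A (small) category with objects of type 'o and morphisms of type 'm,
 equipped with an additive structure on hom sets and a class of conflations
 (pairs (i,p) of an admissible monomorphism i and admissible epimorphism p).
 Cmp g f is the composite g o f.\<close>

record ('o,'m) excat =
  Obj :: "'o set"
  Hom :: "'o \<Rightarrow> 'o \<Rightarrow> 'm set"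
  Cmp :: "'m \<Rightarrow> 'm \<Rightarrow> 'm"
  Idm :: "'o \<Rightarrow> 'm"
  Add :: "'m \<Rightarrow> 'm \<Rightarrow> 'm"
  Neg :: "'m \<Rightarrow> 'm"
  Zm  :: "'o \<Rightarrow> 'o \<Rightarrow> 'm"
  Confl :: "('m \<times> 'm) set"

definition category :: "('o,'m) excat \<Rightarrow> bool" where
  "category C \<longleftrightarrow>
    (\<forall>X Y. X \<notin> Obj C \<or> Y \<notin> Obj C \<longrightarrow> Hom C X Y = {}) \<and>
    (\<forall>X Y X' Y' f. f \<in> Hom C X Y \<and> f \<in> Hom C X' Y' \<longrightarrow> X = X' \<and> Y = Y') \<and>
    (\<forall>X\<in>Obj C. Idm C X \<in> Hom C X X) \<and>
    (\<forall>X Y Z f g. f \<in> Hom C X Y \<longrightarrow> g \<in> Hom C Y Z \<longrightarrow> Cmp C g f \<in> Hom C X Z) \<and>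
    (\<forall>W X Y Z f g h. f \<in> Hom C W X \<longrightarrow> g \<in> Hom C X Y \<longrightarrow> h \<in> Hom C Y Z \<longrightarrow>
        Cmp C h (Cmp C g f) = Cmp C (Cmp C h g) f) \<and>
    (\<forall>X Y f. f \<in> Hom C X Y \<longrightarrow> Cmp C (Idm C Y) f = f \<and> Cmp C f (Idm C X) = f)"

definition preadditive :: "('o,'m) excat \<Rightarrow> bool" where
  "preadditive C \<longleftrightarrow> category C \<and>
    (\<forall>X\<in>Obj C. \<forall>Y\<in>Obj C.
       Zm C X Y \<in> Hom C X Y \<and>
       (\<forall>f\<in>Hom C X Y. \<forall>g\<in>Hom C X Y. Add C f g \<in> Hom C X Y \<and> Add C f g = Add C g f) \<and>
       (\<forall>f\<in>Hom C X Y. \<forall>g\<in>Hom C X Y. \<forall>h\<in>Hom C X Y.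
           Add C (Add C f g) h = Add C f (Add C g h)) \<and>
       (\<forall>f\<in>Hom C X Y. Neg C f \<in> Hom C X Y \<and> Add C f (Zm C X Y) = f \<and>
           Add C f (Neg C f) = Zm C X Y)) \<and>
    (\<forall>X Y Z f g g'. f \<in> Hom C X Y \<longrightarrow> g \<in> Hom C Y Z \<longrightarrow> g' \<in> Hom C Y Z \<longrightarrow>
        Cmp C (Add C g g') f = Add C (Cmp C g f) (Cmp C g' f)) \<and>
    (\<forall>X Y Z f f' g. f \<in> Hom C X Y \<longrightarrow> f' \<in> Hom C X Y \<longrightarrow> g \<in> Hom C Y Z \<longrightarrow>
        Cmp C g (Add C f f') = Add C (Cmp C g f) (Cmp C g f'))"

definition zero_obj :: "('o,'m) excat \<Rightarrow> 'o \<Rightarrow> bool" where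
  "zero_obj C Z \<longleftrightarrow> Z \<in> Obj C \<and>
     (\<forall>X\<in>Obj C. (\<exists>!f. f \<in> Hom C Z X) \<and> (\<exists>!f. f \<in> Hom C X Z))"

definition additive :: "('o,'m) excat \<Rightarrow> bool" where
  "additive C \<longleftrightarrow> preadditive C \<and> (\<exists>Z. zero_obj C Z) \<and>
    (\<forall>A\<in>Obj C. \<forall>B\<in>Obj C. \<exists>S i1 i2 p1 p2.
       i1 \<in> Hom C A S \<and> i2 \<in> Hom C B S \<and> p1 \<in> Hom C S A \<and> p2 \<in> Hom C S B \<and>
       Cmp C p1 i1 = Idm C A \<and> Cmp C p2 i2 = Idm C B \<and>
       Cmp C p2 i1 = Zm C A B \<and> Cmp C p1 i2 = Zm C B A \<and>
       Add C (Cmp C i1 p1) (Cmp C i2 p2) = Idm C S)"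

definition is_iso :: "('o,'m) excat \<Rightarrow> 'm \<Rightarrow> 'o \<Rightarrow> 'o \<Rightarrow> bool" where
  "is_iso C f X Y \<longleftrightarrow> f \<in> Hom C X Y \<and>
     (\<exists>g\<in>Hom C Y X. Cmp C g f = Idm C X \<and> Cmp C f g = Idm C Y)"

definition kc_pair :: "('o,'m) excat \<Rightarrow> 'm \<Rightarrow> 'm \<Rightarrow> bool" where
  "kc_pair C i p \<longleftrightarrow> (\<exists>A B D. i \<in> Hom C A B \<and> p \<in> Hom C B D \<and>
     Cmp C p i = Zm C A D \<and>
     (\<forall>X\<in>Obj C. \<forall>f\<in>Hom C X B. Cmp C p f = Zm C X D \<longrightarrow>
         (\<exists>!g. g \<in> Hom C X A \<and> Cmp C i g = f)) \<and>
     (\<forall>X\<in>Obj C. \<forall>f\<in>Hom C B X. Cmp C f i = Zm C A X \<longrightarrow>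
         (\<exists>!g. g \<in> Hom C D X \<and> Cmp C g p = f)))"

definition adm_mono :: "('o,'m) excat \<Rightarrow> 'm \<Rightarrow> bool" where
  "adm_mono C i \<longleftrightarrow> (\<exists>p. (i, p) \<in> Confl C)"

definition adm_epi :: "('o,'m) excat \<Rightarrow> 'm \<Rightarrow> bool" where
  "adm_epi C p \<longleftrightarrow> (\<exists>i. (i, p) \<in> Confl C)"

text \<open>Exact category in the sense of Quillen, with the axioms as in Buehler,
  "Exact categories", Def. 2.1.\<close>
definition exact_category :: "('o,'m) excat \<Rightarrow> bool" where
  "exact_category C \<longleftrightarrow> additive C \<and>
    (\<forall>(i,p)\<in>Confl C. kc_pair C i p) \<and>
    (\<forall>i p i' p' A B D A' B' D' a b c.
        (i, p) \<in> Confl C \<and> i \<in> Hom C A B \<and> p \<in> Hom C B D \<and>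
        i' \<in> Hom C A' B' \<and> p' \<in> Hom C B' D' \<and>
        is_iso C a A A' \<and> is_iso C b B B' \<and> is_iso C c D D' \<and>
        Cmp C i' a = Cmp C b i \<and> Cmp C p' b = Cmp C c p \<longrightarrow> (i', p') \<in> Confl C) \<and>
    (\<forall>A\<in>Obj C. adm_mono C (Idm C A)) \<and>
    (\<forall>A\<in>Obj C. adm_epi C (Idm C A)) \<and>
    (\<forall>A B D i j. i \<in> Hom C A B \<and> j \<in> Hom C B D \<and> adm_mono C i \<and> adm_mono C j
        \<longrightarrow> adm_mono C (Cmp C j i)) \<and>
    (\<forall>A B D p q. p \<in> Hom C A B \<and> q \<in> Hom C B D \<and> adm_epi C p \<and> adm_epi C q
        \<longrightarrow> adm_epi C (Cmp C q p)) \<and>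
    (\<forall>A B A' i f. i \<in> Hom C A B \<and> adm_mono C i \<and> f \<in> Hom C A A' \<longrightarrow>
        (\<exists>B' i' f'. i' \<in> Hom C A' B' \<and> f' \<in> Hom C B B' \<and>
           Cmp C i' f = Cmp C f' i \<and> adm_mono C i' \<and>
           (\<forall>X\<in>Obj C. \<forall>g\<in>Hom C A' X. \<forall>h\<in>Hom C B X. Cmp C g f = Cmp C h i \<longrightarrow>
               (\<exists>!u. u \<in> Hom C B' X \<and> Cmp C u i' = g \<and> Cmp C u f' = h)))) \<and>
    (\<forall>B D D' p f. p \<in> Hom C B D \<and> adm_epi C p \<and> f \<in> Hom C D' D \<longrightarrow>
        (\<exists>B' p' f'. p' \<in> Hom C B' D' \<and> f' \<in> Hom C B' B \<and>
           Cmp C p f' = Cmp C f p' \<and> adm_epi C p' \<and>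
           (\<forall>X\<in>Obj C. \<forall>g\<in>Hom C X D'. \<forall>h\<in>Hom C X B. Cmp C f g = Cmp C p h \<longrightarrow>
               (\<exists>!u. u \<in> Hom C X B' \<and> Cmp C p' u = g \<and> Cmp C f' u = h))))"

text \<open>A binary complex: graded object (indexed by int), top differential, bottom
  differential. d n : P n -> P (n - 1).\<close>
type_synonym ('o,'m) bcx = "(int \<Rightarrow> 'o) \<times> (int \<Rightarrow> 'm) \<times> (int \<Rightarrow> 'm)"

definition acyclic :: "('o,'m) excat \<Rightarrow> (int \<Rightarrow> 'o) \<Rightarrow> (int \<Rightarrow> 'm) \<Rightarrow> bool" where
  "acyclic C P d \<longleftrightarrow> (\<exists>J e m. \<forall>n.
      J n \<in> Obj C \<and> e n \<in> Hom C (P n) (J (n - 1)) \<and> m n \<in> Hom C (J n) (P n) \<and>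
      d n = Cmp C (m (n - 1)) (e n) \<and> (m n, e n) \<in> Confl C)"

definition is_bcx :: "('o,'m) excat \<Rightarrow> nat \<Rightarrow> ('o,'m) bcx \<Rightarrow> bool" where
  "is_bcx C k X \<longleftrightarrow> (case X of (P, d, d') \<Rightarrow>
     (\<forall>n. P n \<in> Obj C \<and> d n \<in> Hom C (P n) (P (n - 1)) \<and> d' n \<in> Hom C (P n) (P (n - 1))) \<and>
     (\<forall>n. n < 0 \<or> n > int k \<longrightarrow> zero_obj C (P n)) \<and>
     acyclic C P d \<and> acyclic C P d')"

definition chain_map :: "('o,'m) excat \<Rightarrow> (int \<Rightarrow> 'o) \<Rightarrow> (int \<Rightarrow> 'm) \<Rightarrow>
    (int \<Rightarrow> 'o) \<Rightarrow> (int \<Rightarrow> 'm) \<Rightarrow> (int \<Rightarrow> 'm) \<Rightarrow> bool" where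
  "chain_map C P d Q e f \<longleftrightarrow>
     (\<forall>n. f n \<in> Hom C (P n) (Q n) \<and> Cmp C (f (n - 1)) (d n) = Cmp C (e n) (f n))"

definition bmor :: "('o,'m) excat \<Rightarrow> ('o,'m) bcx \<Rightarrow> ('o,'m) bcx \<Rightarrow> (int \<Rightarrow> 'm) \<Rightarrow> bool" where
  "bmor C X Y f \<longleftrightarrow> (case X of (P, d, d') \<Rightarrow> case Y of (Q, e, e') \<Rightarrow>
     chain_map C P d Q e f \<and> chain_map C P d' Q e' f)"

definition diagonal :: "('o,'m) bcx \<Rightarrow> bool" where
  "diagonal X \<longleftrightarrow> fst (snd X) = snd (snd X)"

definition sw :: "('o,'m) bcx \<Rightarrow> ('o,'m) bcx" where
  "sw X = (case X of (P, d, d') \<Rightarrow> (P, d', d))"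

definition bpair :: "('o,'m) excat \<Rightarrow> 'o \<Rightarrow> 'o \<Rightarrow> 'm \<Rightarrow> 'm \<Rightarrow> ('o,'m) bcx" where
  "bpair C X Y \<alpha> \<beta> =
    (let Z = (SOME z. zero_obj C z);
         P = (\<lambda>n::int. if n = 1 then X else if n = 0 then Y else Z)
     in (P, (\<lambda>n. if n = 1 then \<alpha> else Zm C (P n) (P (n - 1))),
            (\<lambda>n. if n = 1 then \<beta> else Zm C (P n) (P (n - 1)))))"

text \<open>Elements of the free abelian group on a type 'c are represented as
  integer-valued functions; gen x is the basis element of x.\<close>
definition gen :: "'c \<Rightarrow> 'c \<Rightarrow> int" where
  "gen x = (\<lambda>y. if y = x then 1 else 0)"

inductive_set zspan :: "('c \<Rightarrow> int) set \<Rightarrow> ('c \<Rightarrow> int) set" for R where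
  zspan_zero: "(\<lambda>_. 0) \<in> zspan R"
| zspan_base: "r \<in> R \<Longrightarrow> r \<in> zspan R"
| zspan_diff: "a \<in> zspan R \<Longrightarrow> b \<in> zspan R \<Longrightarrow> (\<lambda>x. a x - b x) \<in> zspan R"

text \<open>Relations of B_1^k: short exact sequences in the exact category of binary
  acyclic complexes supported on [0,k] (degreewise conflations).\<close>
definition rel_B :: "('o,'m) excat \<Rightarrow> nat \<Rightarrow> (('o,'m) bcx \<Rightarrow> int) set" where
  "rel_B C k = {(\<lambda>z. gen B z - gen A z - gen D z) | A B D i p.
      is_bcx C k A \<and> is_bcx C k B \<and> is_bcx C k D \<and> bmor C A B i \<and> bmor C B D p \<and>
      (\<forall>n. (i n, p n) \<in> Confl C)}"

text \<open>Additional relations of K_1^k: classes of diagonal complexes.\<close>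
definition rel_K :: "('o,'m) excat \<Rightarrow> nat \<Rightarrow> (('o,'m) bcx \<Rightarrow> int) set" where
  "rel_K C k = {gen X | X. is_bcx C k X \<and> diagonal X}"

text \<open>Additional relations of L_1^k: binary ladders with P_i = Q_i and all
  sigma_i, tau_i involutions.\<close>
definition rel_L :: "('o,'m) excat \<Rightarrow> nat \<Rightarrow> (('o,'m) bcx \<Rightarrow> int) set" where
  "rel_L C k = {(\<lambda>z. gen (P, e, e') z - gen (P, d, d') z
        - (\<Sum>i\<in>{0..k}. (-1) ^ i * gen (bpair C (P (int i)) (P (int i)) (\<sigma> (int i)) (\<tau> (int i))) z))
      | P d d' e e' \<sigma> \<tau>.
      is_bcx C k (P, d, d') \<and> is_bcx C k (P, e, e') \<and>
      chain_map C P d P e \<sigma> \<and> chain_map C P d' P e' \<tau> \<and>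
      (\<forall>n. Cmp C (\<sigma> n) (\<sigma> n) = Idm C (P n) \<and> Cmp C (\<tau> n) (\<tau> n) = Idm C (P n))}"

definition L1_eq :: "('o,'m) excat \<Rightarrow> nat \<Rightarrow> (('o,'m) bcx \<Rightarrow> int) \<Rightarrow> (('o,'m) bcx \<Rightarrow> int) \<Rightarrow> bool" where
  "L1_eq C k a b \<longleftrightarrow> (\<lambda>z. a z - b z) \<in> zspan (rel_B C k \<union> rel_K C k \<union> rel_L C k)"

end

theory Submission
  imports Defs
begin

text \<open>Write \<open>X = (P, d, d')\<close> and let \<open>Q = (P \<oplus> P, d \<oplus> d', d' \<oplus> d)\<close>. The split sequences
  \<open>P \<rightarrow> P \<oplus> P \<rightarrow> P\<close> form a short exact sequence \<open>X \<rightarrowtail> Q \<twoheadrightarrow> sw X\<close> of binary complexes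
  (a direct sum of conflations is a conflation), so \<open>Q = X + sw X\<close>. The involution swapping
  the two summands is a chain isomorphism \<open>d' \<oplus> d \<rightarrow> d \<oplus> d'\<close>, so the ladder with \<open>\<sigma> = 1\<close>,
  \<open>\<tau> = swap\<close> gives \<open>D - Q = \<Sigma>\<^sub>i (-1)\<^sup>i \<langle>1, swap\<^sub>i\<rangle>\<close> for the diagonal complex
  \<open>D = (P \<oplus> P, d \<oplus> d', d \<oplus> d')\<close>. The same ladder from \<open>(P \<oplus> P, d \<oplus> d, d \<oplus> d)\<close> to itself
  shows that this sum vanishes, hence \<open>Q = D = 0\<close> and \<open>sw X = - X\<close>.\<close>

locale exact_cat =
  fixes C :: "('o,'m) excat"
  assumes exact: "exact_category C"
begin

abbreviation mcomp (infixr "\<odot>" 70) where "g \<odot> f \<equiv> Cmp C g f"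
abbreviation madd (infixl "\<oplus>" 65) where "f \<oplus> g \<equiv> Add C f g"

lemma additive: "additive C"
  using exact unfolding exact_category_def by blast

lemma preadditive: "preadditive C"
  using additive unfolding additive_def by blast

lemma category: "category C"
  using preadditive unfolding preadditive_def by blast

lemma Hom_unique: "f \<in> Hom C X Y \<Longrightarrow> f \<in> Hom C X' Y' \<Longrightarrow> X = X' \<and> Y = Y'"
  using category unfolding category_def by (elim conjE) metis

lemma Hom_Obj: "f \<in> Hom C X Y \<Longrightarrow> X \<in> Obj C \<and> Y \<in> Obj C"
  using category unfolding category_def by (elim conjE) (metis empty_iff)

lemma comp_in_Hom: "f \<in> Hom C X Y \<Longrightarrow> g \<in> Hom C Y Z \<Longrightarrow> g \<odot> f \<in> Hom C X Z"
  using category unfolding category_def by blast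

lemma Idm_in_Hom: "X \<in> Obj C \<Longrightarrow> Idm C X \<in> Hom C X X"
  using category unfolding category_def by blast

lemma comp_assoc_Hom:
  "f \<in> Hom C W X \<Longrightarrow> g \<in> Hom C X Y \<Longrightarrow> h \<in> Hom C Y Z \<Longrightarrow> (h \<odot> g) \<odot> f = h \<odot> (g \<odot> f)"
  using category unfolding category_def by metis

lemma Idm_comp_Hom: "f \<in> Hom C X Y \<Longrightarrow> Idm C Y \<odot> f = f"
  and comp_Idm_Hom: "f \<in> Hom C X Y \<Longrightarrow> f \<odot> Idm C X = f"
  using category unfolding category_def by blast+

lemma Hom_group_axioms:
  assumes "X \<in> Obj C" "Y \<in> Obj C"
  shows "Zm C X Y \<in> Hom C X Y \<and>
       (\<forall>f\<in>Hom C X Y. \<forall>g\<in>Hom C X Y. f \<oplus> g \<in> Hom C X Y \<and> f \<oplus> g = g \<oplus> f) \<and>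
       (\<forall>f\<in>Hom C X Y. \<forall>g\<in>Hom C X Y. \<forall>h\<in>Hom C X Y. (f \<oplus> g) \<oplus> h = f \<oplus> (g \<oplus> h)) \<and>
       (\<forall>f\<in>Hom C X Y. Neg C f \<in> Hom C X Y \<and> f \<oplus> Zm C X Y = f \<and> f \<oplus> Neg C f = Zm C X Y)"
  using preadditive assms unfolding preadditive_def by (elim conjE) blast

lemma Zm_in_Hom: "X \<in> Obj C \<Longrightarrow> Y \<in> Obj C \<Longrightarrow> Zm C X Y \<in> Hom C X Y"
  using Hom_group_axioms by blast

lemma Add_in_Hom: "f \<in> Hom C X Y \<Longrightarrow> g \<in> Hom C X Y \<Longrightarrow> f \<oplus> g \<in> Hom C X Y"
  using Hom_group_axioms Hom_Obj by meson

lemma Add_commute_Hom: "f \<in> Hom C X Y \<Longrightarrow> g \<in> Hom C X Y \<Longrightarrow> f \<oplus> g = g \<oplus> f"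
  using Hom_group_axioms Hom_Obj by meson

lemma Add_assoc_Hom:
  "f \<in> Hom C X Y \<Longrightarrow> g \<in> Hom C X Y \<Longrightarrow> h \<in> Hom C X Y \<Longrightarrow> (f \<oplus> g) \<oplus> h = f \<oplus> (g \<oplus> h)"
  using Hom_group_axioms Hom_Obj by meson

lemma Add_Zm_Hom: "f \<in> Hom C X Y \<Longrightarrow> f \<oplus> Zm C X Y = f"
  using Hom_group_axioms Hom_Obj by meson

lemma Add_Neg_Hom: "f \<in> Hom C X Y \<Longrightarrow> Neg C f \<in> Hom C X Y \<and> f \<oplus> Neg C f = Zm C X Y"
  using Hom_group_axioms Hom_Obj by meson

lemma Add_comp_distrib_Hom:
  "f \<in> Hom C X Y \<Longrightarrow> g \<in> Hom C Y Z \<Longrightarrow> g' \<in> Hom C Y Z \<Longrightarrow> (g \<oplus> g') \<odot> f = g \<odot> f \<oplus> g' \<odot> f"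
  using preadditive unfolding preadditive_def by blast

lemma comp_Add_distrib_Hom:
  "f \<in> Hom C X Y \<Longrightarrow> f' \<in> Hom C X Y \<Longrightarrow> g \<in> Hom C Y Z \<Longrightarrow> g \<odot> (f \<oplus> f') = g \<odot> f \<oplus> g \<odot> f'"
  using preadditive unfolding preadditive_def by blast

lemma Add_left_cancel_Hom:
  assumes "f \<in> Hom C X Y" "g \<in> Hom C X Y" "h \<in> Hom C X Y" "f \<oplus> g = f \<oplus> h"
  shows "g = h"
proof -
  obtain n where n: "n \<in> Hom C X Y" "f \<oplus> n = Zm C X Y" using Add_Neg_Hom assms by blast
  have "g = (n \<oplus> f) \<oplus> g" using assms n Add_commute_Hom Add_Zm_Hom Zm_in_Hom Hom_Obj by metis
  also have "\<dots> = n \<oplus> (f \<oplus> h)" using assms n Add_assoc_Hom by metis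
  also have "\<dots> = (n \<oplus> f) \<oplus> h" using assms n Add_assoc_Hom by metis
  also have "\<dots> = h" using assms n Add_commute_Hom Add_Zm_Hom Zm_in_Hom Hom_Obj by metis
  finally show ?thesis .
qed

lemma comp_Zm_Hom:
  assumes "f \<in> Hom C Y Z" "W \<in> Obj C"
  shows "f \<odot> Zm C W Y = Zm C W Z"
proof -
  have Y: "Y \<in> Obj C" "Z \<in> Obj C" using assms Hom_Obj by auto
  have zz: "Zm C W Y \<oplus> Zm C W Y = Zm C W Y" using Add_Zm_Hom Zm_in_Hom Y assms by blast
  have h: "f \<odot> Zm C W Y \<in> Hom C W Z" using comp_in_Hom Zm_in_Hom assms Y by blast
  have "f \<odot> Zm C W Y \<oplus> f \<odot> Zm C W Y = f \<odot> Zm C W Y \<oplus> Zm C W Z"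
    using comp_Add_distrib_Hom[of "Zm C W Y" W Y "Zm C W Y" f Z] zz assms Y Zm_in_Hom Add_Zm_Hom[OF h]
    by metis
  thus ?thesis using Add_left_cancel_Hom h Zm_in_Hom Y assms by blast
qed

lemma Zm_comp_Hom:
  assumes "f \<in> Hom C W X" "Y \<in> Obj C"
  shows "Zm C X Y \<odot> f = Zm C W Y"
proof -
  have Y: "W \<in> Obj C" "X \<in> Obj C" using assms Hom_Obj by auto
  have zz: "Zm C X Y \<oplus> Zm C X Y = Zm C X Y" using Add_Zm_Hom Zm_in_Hom Y assms by blast
  have h: "Zm C X Y \<odot> f \<in> Hom C W Y" using comp_in_Hom Zm_in_Hom assms Y by blast
  have "Zm C X Y \<odot> f \<oplus> Zm C X Y \<odot> f = Zm C X Y \<odot> f \<oplus> Zm C W Y"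
    using Add_comp_distrib_Hom[of f W X "Zm C X Y" Y "Zm C X Y"] zz assms Y Zm_in_Hom Add_Zm_Hom[OF h]
    by metis
  thus ?thesis using Add_left_cancel_Hom h Zm_in_Hom Y assms by blast
qed

text \<open>Hom sets are disjoint, so every morphism has a well-defined domain and codomain; this
  lets the algebraic laws below be stated as simplification rules with side conditions
  on \<open>arr\<close>, \<open>dom\<close> and \<open>cod\<close> only.\<close>

definition arr :: "'m \<Rightarrow> bool" where "arr f \<longleftrightarrow> (\<exists>X Y. f \<in> Hom C X Y)"
definition dom :: "'m \<Rightarrow> 'o" where "dom f = (THE X. \<exists>Y. f \<in> Hom C X Y)"
definition cod :: "'m \<Rightarrow> 'o" where "cod f = (THE Y. \<exists>X. f \<in> Hom C X Y)"

lemma in_HomD: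
  assumes "f \<in> Hom C X Y"
  shows "arr f" "dom f = X" "cod f = Y" "X \<in> Obj C" "Y \<in> Obj C"
  using assms Hom_unique Hom_Obj unfolding arr_def dom_def cod_def by blast+

lemma arr_in_Hom: "arr f \<Longrightarrow> f \<in> Hom C (dom f) (cod f)"
  using in_HomD arr_def by metis

lemma in_HomI: "arr f \<Longrightarrow> dom f = X \<Longrightarrow> cod f = Y \<Longrightarrow> f \<in> Hom C X Y"
  using arr_in_Hom by blast

lemma arr_comp [simp]: "arr f \<Longrightarrow> arr g \<Longrightarrow> dom g = cod f \<Longrightarrow> arr (g \<odot> f)"
  by (metis arr_in_Hom comp_in_Hom in_HomD(1))

lemma dom_comp [simp]: "arr f \<Longrightarrow> arr g \<Longrightarrow> dom g = cod f \<Longrightarrow> dom (g \<odot> f) = dom f"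
  by (metis arr_in_Hom comp_in_Hom in_HomD(2))

lemma cod_comp [simp]: "arr f \<Longrightarrow> arr g \<Longrightarrow> dom g = cod f \<Longrightarrow> cod (g \<odot> f) = cod g"
  by (metis arr_in_Hom comp_in_Hom in_HomD(3))

lemma comp_assoc [simp]:
  "arr f \<Longrightarrow> arr g \<Longrightarrow> arr h \<Longrightarrow> dom g = cod f \<Longrightarrow> dom h = cod g \<Longrightarrow> (h \<odot> g) \<odot> f = h \<odot> (g \<odot> f)"
  by (metis arr_in_Hom comp_assoc_Hom)

lemma arr_Idm [simp]: "X \<in> Obj C \<Longrightarrow> arr (Idm C X)"
  and dom_Idm [simp]: "X \<in> Obj C \<Longrightarrow> dom (Idm C X) = X"
  and cod_Idm [simp]: "X \<in> Obj C \<Longrightarrow> cod (Idm C X) = X"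
  using Idm_in_Hom in_HomD by blast+

lemma Idm_comp [simp]: "arr f \<Longrightarrow> Y = cod f \<Longrightarrow> Idm C Y \<odot> f = f"
  by (metis arr_in_Hom Idm_comp_Hom)

lemma comp_Idm [simp]: "arr f \<Longrightarrow> X = dom f \<Longrightarrow> f \<odot> Idm C X = f"
  by (metis arr_in_Hom comp_Idm_Hom)

lemma arr_Zm [simp]: "X \<in> Obj C \<Longrightarrow> Y \<in> Obj C \<Longrightarrow> arr (Zm C X Y)"
  and dom_Zm [simp]: "X \<in> Obj C \<Longrightarrow> Y \<in> Obj C \<Longrightarrow> dom (Zm C X Y) = X"
  and cod_Zm [simp]: "X \<in> Obj C \<Longrightarrow> Y \<in> Obj C \<Longrightarrow> cod (Zm C X Y) = Y"
  using Zm_in_Hom in_HomD by blast+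

lemma arr_Add [simp]: "arr f \<Longrightarrow> arr g \<Longrightarrow> dom g = dom f \<Longrightarrow> cod g = cod f \<Longrightarrow> arr (f \<oplus> g)"
  by (metis arr_in_Hom Add_in_Hom in_HomD(1))

lemma dom_Add [simp]:
  "arr f \<Longrightarrow> arr g \<Longrightarrow> dom g = dom f \<Longrightarrow> cod g = cod f \<Longrightarrow> dom (f \<oplus> g) = dom f"
  by (metis arr_in_Hom Add_in_Hom in_HomD(2))

lemma cod_Add [simp]:
  "arr f \<Longrightarrow> arr g \<Longrightarrow> dom g = dom f \<Longrightarrow> cod g = cod f \<Longrightarrow> cod (f \<oplus> g) = cod f"
  by (metis arr_in_Hom Add_in_Hom in_HomD(3))

lemma Add_comp_distrib [simp]:
  "arr f \<Longrightarrow> arr g \<Longrightarrow> arr g' \<Longrightarrow> dom g = cod f \<Longrightarrow> dom g' = dom g \<Longrightarrow> cod g' = cod g \<Longrightarrow>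
   (g \<oplus> g') \<odot> f = g \<odot> f \<oplus> g' \<odot> f"
  by (metis arr_in_Hom Add_comp_distrib_Hom)

lemma comp_Add_distrib [simp]:
  "arr f \<Longrightarrow> arr f' \<Longrightarrow> arr g \<Longrightarrow> dom f' = dom f \<Longrightarrow> cod f' = cod f \<Longrightarrow> dom g = cod f \<Longrightarrow>
   g \<odot> (f \<oplus> f') = g \<odot> f \<oplus> g \<odot> f'"
  by (metis arr_in_Hom comp_Add_distrib_Hom)

lemma comp_Zm [simp]: "arr f \<Longrightarrow> Y = dom f \<Longrightarrow> X \<in> Obj C \<Longrightarrow> f \<odot> Zm C X Y = Zm C X (cod f)"
  by (metis arr_in_Hom comp_Zm_Hom)

lemma Zm_comp [simp]: "arr f \<Longrightarrow> X = cod f \<Longrightarrow> Y \<in> Obj C \<Longrightarrow> Zm C X Y \<odot> f = Zm C (dom f) Y"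
  by (metis arr_in_Hom Zm_comp_Hom)

lemma Add_Zm [simp]: "arr f \<Longrightarrow> X = dom f \<Longrightarrow> Y = cod f \<Longrightarrow> f \<oplus> Zm C X Y = f"
  by (metis arr_in_Hom Add_Zm_Hom)

lemma Zm_Add [simp]: "arr f \<Longrightarrow> X = dom f \<Longrightarrow> Y = cod f \<Longrightarrow> Zm C X Y \<oplus> f = f"
  by (metis arr_in_Hom Add_Zm_Hom Add_commute_Hom Zm_in_Hom Hom_Obj)

lemma Add_assoc [simp]:
  "arr f \<Longrightarrow> arr g \<Longrightarrow> arr h \<Longrightarrow> dom g = dom f \<Longrightarrow> cod g = cod f \<Longrightarrow> dom h = dom f \<Longrightarrow>
   cod h = cod f \<Longrightarrow> (f \<oplus> g) \<oplus> h = f \<oplus> (g \<oplus> h)"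
  by (metis arr_in_Hom Add_assoc_Hom)

lemma Add_commute: "arr f \<Longrightarrow> arr g \<Longrightarrow> dom g = dom f \<Longrightarrow> cod g = cod f \<Longrightarrow> f \<oplus> g = g \<oplus> f"
  by (metis arr_in_Hom Add_commute_Hom)

lemma Add_left_commute:
  "arr f \<Longrightarrow> arr g \<Longrightarrow> arr h \<Longrightarrow> dom g = dom f \<Longrightarrow> cod g = cod f \<Longrightarrow> dom h = dom f \<Longrightarrow>
   cod h = cod f \<Longrightarrow> f \<oplus> (g \<oplus> h) = g \<oplus> (f \<oplus> h)"
  by (metis Add_assoc Add_commute arr_Add dom_Add cod_Add)

lemmas Add_ac = Add_commute Add_left_commute

section \<open>Biproducts\<close>

definition biprod :: "'o \<Rightarrow> 'o \<Rightarrow> 'o \<Rightarrow> 'm \<Rightarrow> 'm \<Rightarrow> 'm \<Rightarrow> 'm \<Rightarrow> bool" where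
  "biprod A B S i1 i2 p1 p2 \<longleftrightarrow>
     i1 \<in> Hom C A S \<and> i2 \<in> Hom C B S \<and> p1 \<in> Hom C S A \<and> p2 \<in> Hom C S B \<and>
     p1 \<odot> i1 = Idm C A \<and> p2 \<odot> i2 = Idm C B \<and> p2 \<odot> i1 = Zm C A B \<and> p1 \<odot> i2 = Zm C B A \<and>
     i1 \<odot> p1 \<oplus> i2 \<odot> p2 = Idm C S"

lemma biprod_exists: "A \<in> Obj C \<Longrightarrow> B \<in> Obj C \<Longrightarrow> \<exists>S i1 i2 p1 p2. biprod A B S i1 i2 p1 p2"
  using additive unfolding additive_def biprod_def by blast

lemma biprod_family_exists:
  assumes "\<And>n. A n \<in> Obj C" "\<And>n. B n \<in> Obj C"
  obtains S i1 i2 p1 p2 where "\<And>n. biprod (A n) (B n) (S n) (i1 n) (i2 n) (p1 n) (p2 n)"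
proof -
  have "\<forall>n. \<exists>S i1 i2 p1 p2. biprod (A n) (B n) S i1 i2 p1 p2"
    using biprod_exists assms by blast
  then show ?thesis using that by metis
qed

lemma biprod_swap: "biprod A B S i1 i2 p1 p2 \<Longrightarrow> biprod B A S i2 i1 p2 p1"
  unfolding biprod_def by (metis Add_commute_Hom comp_in_Hom)

lemma biprodD:
  assumes "biprod A B S i1 i2 p1 p2"
  shows "arr i1" "dom i1 = A" "cod i1 = S" "arr i2" "dom i2 = B" "cod i2 = S"
    "arr p1" "dom p1 = S" "cod p1 = A" "arr p2" "dom p2 = S" "cod p2 = B"
    "A \<in> Obj C" "B \<in> Obj C" "S \<in> Obj C"
    "p1 \<odot> i1 = Idm C A" "p2 \<odot> i2 = Idm C B" "p2 \<odot> i1 = Zm C A B" "p1 \<odot> i2 = Zm C B A"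
    "i1 \<odot> p1 \<oplus> i2 \<odot> p2 = Idm C S"
  using assms unfolding biprod_def by (auto dest: in_HomD)

lemma biprod_proj_inj:
  assumes "biprod A B S i1 i2 p1 p2" "arr x"
  shows "cod x = A \<Longrightarrow> p1 \<odot> (i1 \<odot> x) = x" "cod x = B \<Longrightarrow> p2 \<odot> (i2 \<odot> x) = x"
    "cod x = A \<Longrightarrow> p2 \<odot> (i1 \<odot> x) = Zm C (dom x) B"
    "cod x = B \<Longrightarrow> p1 \<odot> (i2 \<odot> x) = Zm C (dom x) A"
  using assms by (simp_all add: biprodD(1-19)[OF assms(1)] flip: comp_assoc)

lemma biprod_out_eqI:
  assumes b: "biprod A B S i1 i2 p1 p2" and u: "u \<in> Hom C S X" "u' \<in> Hom C S X"
    and "u \<odot> i1 = u' \<odot> i1" "u \<odot> i2 = u' \<odot> i2"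
  shows "u = u'"
proof -
  note B = biprodD(1-19)[OF b] and U = in_HomD[OF u(1)] in_HomD[OF u(2)]
  have "u = u \<odot> (i1 \<odot> p1 \<oplus> i2 \<odot> p2)" using B U by (simp add: biprodD(20)[OF b])
  also have "\<dots> = (u \<odot> i1) \<odot> p1 \<oplus> (u \<odot> i2) \<odot> p2" using B U by simp
  also have "\<dots> = (u' \<odot> i1) \<odot> p1 \<oplus> (u' \<odot> i2) \<odot> p2" using assms by simp
  also have "\<dots> = u' \<odot> (i1 \<odot> p1 \<oplus> i2 \<odot> p2)" using B U by simp
  also have "\<dots> = u'" using B U by (simp add: biprodD(20)[OF b])
  finally show ?thesis .
qed

lemma biprod_in_eqI:
  assumes b: "biprod A B S i1 i2 p1 p2" and u: "u \<in> Hom C X S" "u' \<in> Hom C X S"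
    and "p1 \<odot> u = p1 \<odot> u'" "p2 \<odot> u = p2 \<odot> u'"
  shows "u = u'"
proof -
  note B = biprodD(1-19)[OF b] and U = in_HomD[OF u(1)] in_HomD[OF u(2)]
  have "u = (i1 \<odot> p1 \<oplus> i2 \<odot> p2) \<odot> u" using B U by (simp add: biprodD(20)[OF b])
  also have "\<dots> = i1 \<odot> (p1 \<odot> u) \<oplus> i2 \<odot> (p2 \<odot> u)" using B U by simp
  also have "\<dots> = i1 \<odot> (p1 \<odot> u') \<oplus> i2 \<odot> (p2 \<odot> u')" using assms by simp
  also have "\<dots> = (i1 \<odot> p1 \<oplus> i2 \<odot> p2) \<odot> u'" using B U by simp
  also have "\<dots> = u'" using B U by (simp add: biprodD(20)[OF b])
  finally show ?thesis .
qed

lemma zero_obj_out_Zm: "zero_obj C Z \<Longrightarrow> f \<in> Hom C Z X \<Longrightarrow> f = Zm C Z X"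
  unfolding zero_obj_def by (metis Hom_Obj Zm_in_Hom)

lemma zero_obj_in_Zm: "zero_obj C Z \<Longrightarrow> f \<in> Hom C X Z \<Longrightarrow> f = Zm C X Z"
  unfolding zero_obj_def by (metis Hom_Obj Zm_in_Hom)

lemma zero_obj_biprod:
  assumes b: "biprod A B S i1 i2 p1 p2" and za: "zero_obj C A" and zb: "zero_obj C B"
  shows "zero_obj C S"
proof -
  note B = biprodD[OF b]
  have out: "f = Zm C S X" if f: "f \<in> Hom C S X" for f X
  proof (rule biprod_out_eqI[OF b f])
    note F = in_HomD[OF f]
    show "Zm C S X \<in> Hom C S X" using F B by (simp add: Zm_in_Hom)
    have "f \<odot> i1 = Zm C A X" by (rule zero_obj_out_Zm[OF za]) (use F B in \<open>simp add: in_HomI\<close>)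
    thus "f \<odot> i1 = Zm C S X \<odot> i1" using F B by simp
    have "f \<odot> i2 = Zm C B X" by (rule zero_obj_out_Zm[OF zb]) (use F B in \<open>simp add: in_HomI\<close>)
    thus "f \<odot> i2 = Zm C S X \<odot> i2" using F B by simp
  qed
  have inn: "f = Zm C X S" if f: "f \<in> Hom C X S" for f X
  proof (rule biprod_in_eqI[OF b f])
    note F = in_HomD[OF f]
    show "Zm C X S \<in> Hom C X S" using F B by (simp add: Zm_in_Hom)
    have "p1 \<odot> f = Zm C X A" by (rule zero_obj_in_Zm[OF za]) (use F B in \<open>simp add: in_HomI\<close>)
    thus "p1 \<odot> f = p1 \<odot> Zm C X S" using F B by simp
    have "p2 \<odot> f = Zm C X B" by (rule zero_obj_in_Zm[OF zb]) (use F B in \<open>simp add: in_HomI\<close>)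
    thus "p2 \<odot> f = p2 \<odot> Zm C X S" using F B by simp
  qed
  show ?thesis unfolding zero_obj_def
  proof (intro conjI ballI)
    show "S \<in> Obj C" using B by simp
    fix X assume X: "X \<in> Obj C"
    show "\<exists>!f. f \<in> Hom C S X" using out Zm_in_Hom[OF B(15) X] by blast
    show "\<exists>!f. f \<in> Hom C X S" using inn Zm_in_Hom[OF X B(15)] by blast
  qed
qed

section \<open>Conflations\<close>

lemma confl_kc_pair: "(i, p) \<in> Confl C \<Longrightarrow> kc_pair C i p"
  using exact unfolding exact_category_def by fast

lemma confl_iso_closed:
  assumes "(i, p) \<in> Confl C" "i \<in> Hom C A B" "p \<in> Hom C B D"
    and "i' \<in> Hom C A' B'" "p' \<in> Hom C B' D'"
    and "is_iso C a A A'" "is_iso C b B B'" "is_iso C c D D'"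
    and "i' \<odot> a = b \<odot> i" "p' \<odot> b = c \<odot> p"
  shows "(i', p') \<in> Confl C"
proof -
  have "\<forall>i p i' p' A B D A' B' D' a b c.
        (i, p) \<in> Confl C \<and> i \<in> Hom C A B \<and> p \<in> Hom C B D \<and>
        i' \<in> Hom C A' B' \<and> p' \<in> Hom C B' D' \<and>
        is_iso C a A A' \<and> is_iso C b B B' \<and> is_iso C c D D' \<and>
        i' \<odot> a = b \<odot> i \<and> p' \<odot> b = c \<odot> p \<longrightarrow> (i', p') \<in> Confl C"
    using exact unfolding exact_category_def by (elim conjE) assumption
  then show ?thesis using assms by blast
qed

lemma adm_epi_Idm: "A \<in> Obj C \<Longrightarrow> adm_epi C (Idm C A)"
  using exact unfolding exact_category_def by (elim conjE) blast

lemma adm_mono_comp: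
  assumes "i \<in> Hom C A B" "j \<in> Hom C B D" "adm_mono C i" "adm_mono C j"
  shows "adm_mono C (j \<odot> i)"
proof -
  have "\<forall>A B D i j. i \<in> Hom C A B \<and> j \<in> Hom C B D \<and> adm_mono C i \<and> adm_mono C j
        \<longrightarrow> adm_mono C (j \<odot> i)"
    using exact unfolding exact_category_def by (elim conjE) assumption
  then show ?thesis using assms by blast
qed

lemma adm_mono_pushout_exists:
  assumes "i \<in> Hom C A B" "adm_mono C i" "f \<in> Hom C A A'"
  obtains B' i' f' where "i' \<in> Hom C A' B'" "f' \<in> Hom C B B'" "i' \<odot> f = f' \<odot> i" "adm_mono C i'"
    and "\<And>X g h. X \<in> Obj C \<Longrightarrow> g \<in> Hom C A' X \<Longrightarrow> h \<in> Hom C B X \<Longrightarrow> g \<odot> f = h \<odot> i \<Longrightarrow>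
           \<exists>!u. u \<in> Hom C B' X \<and> u \<odot> i' = g \<and> u \<odot> f' = h"
proof -
  have "\<forall>A B A' i f. i \<in> Hom C A B \<and> adm_mono C i \<and> f \<in> Hom C A A' \<longrightarrow>
        (\<exists>B' i' f'. i' \<in> Hom C A' B' \<and> f' \<in> Hom C B B' \<and> i' \<odot> f = f' \<odot> i \<and> adm_mono C i' \<and>
           (\<forall>X\<in>Obj C. \<forall>g\<in>Hom C A' X. \<forall>h\<in>Hom C B X. g \<odot> f = h \<odot> i \<longrightarrow>
               (\<exists>!u. u \<in> Hom C B' X \<and> u \<odot> i' = g \<and> u \<odot> f' = h)))"
    using exact unfolding exact_category_def by (elim conjE) assumption
  then obtain B' i' f' where "i' \<in> Hom C A' B'" "f' \<in> Hom C B B'" "i' \<odot> f = f' \<odot> i" "adm_mono C i'"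
    "\<forall>X\<in>Obj C. \<forall>g\<in>Hom C A' X. \<forall>h\<in>Hom C B X. g \<odot> f = h \<odot> i \<longrightarrow>
       (\<exists>!u. u \<in> Hom C B' X \<and> u \<odot> i' = g \<and> u \<odot> f' = h)"
    using assms by blast
  then show ?thesis using that by blast
qed

lemma Idm_is_iso: "X \<in> Obj C \<Longrightarrow> is_iso C (Idm C X) X X"
  unfolding is_iso_def by (auto intro!: bexI[of _ "Idm C X"] Idm_in_Hom)

lemma confl_Hom:
  assumes "(i, p) \<in> Confl C"
  obtains A B D where "i \<in> Hom C A B" "p \<in> Hom C B D"
  using confl_kc_pair[OF assms] unfolding kc_pair_def by (elim exE conjE) (rule that)

lemma confl_cokernel:
  assumes "(i, p) \<in> Confl C" "i \<in> Hom C A B" "p \<in> Hom C B D"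
  shows "p \<odot> i = Zm C A D"
    and "\<And>X f. X \<in> Obj C \<Longrightarrow> f \<in> Hom C B X \<Longrightarrow> f \<odot> i = Zm C A X \<Longrightarrow> \<exists>g\<in>Hom C D X. g \<odot> p = f"
    and "\<And>X g g'. g \<in> Hom C D X \<Longrightarrow> g' \<in> Hom C D X \<Longrightarrow> g \<odot> p = g' \<odot> p \<Longrightarrow> g = g'"
proof -
  obtain A' B' D' where h: "i \<in> Hom C A' B'" "p \<in> Hom C B' D'" "p \<odot> i = Zm C A' D'"
    "\<forall>X\<in>Obj C. \<forall>f\<in>Hom C B' X. f \<odot> i = Zm C A' X \<longrightarrow> (\<exists>!g. g \<in> Hom C D' X \<and> g \<odot> p = f)"
    using confl_kc_pair[OF assms(1)] unfolding kc_pair_def by (elim exE conjE) (rule that; assumption)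
  have "A' = A" "B' = B" "D' = D" using h(1,2) assms(2,3) Hom_unique by blast+
  note pi = h(3)[unfolded this] and cok = h(4)[unfolded this]
  show "p \<odot> i = Zm C A D" by (fact pi)
  show "\<exists>g\<in>Hom C D X. g \<odot> p = f" if "X \<in> Obj C" "f \<in> Hom C B X" "f \<odot> i = Zm C A X" for X f
    using cok[rule_format, OF that] by blast
  show "g = g'" if g: "g \<in> Hom C D X" "g' \<in> Hom C D X" "g \<odot> p = g' \<odot> p" for X g g'
  proof -
    have X: "X \<in> Obj C" using Hom_Obj[OF g(1)] by blast
    have gp: "g \<odot> p \<in> Hom C B X" using g(1) assms(3) comp_in_Hom by blast
    have "(g \<odot> p) \<odot> i = Zm C A X" using g(1) assms(2,3) X pi by (simp add: in_HomD)
    then have "\<exists>!u. u \<in> Hom C D X \<and> u \<odot> p = g \<odot> p" by (rule cok[rule_format, OF X gp])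
    then show "g = g'" using g by metis
  qed
qed

lemma confl_Hom_epi:
  assumes "(i, p) \<in> Confl C" "i \<in> Hom C A B"
  obtains D where "p \<in> Hom C B D"
proof -
  obtain A' B' D where "i \<in> Hom C A' B'" "p \<in> Hom C B' D" by (rule confl_Hom[OF assms(1)])
  then have "p \<in> Hom C B D" using Hom_unique[OF assms(2)] by blast
  then show ?thesis by (rule that)
qed

lemma confl_Hom_mono:
  assumes "(i, p) \<in> Confl C" "p \<in> Hom C B D"
  obtains A where "i \<in> Hom C A B"
proof -
  obtain A B' D' where "i \<in> Hom C A B'" "p \<in> Hom C B' D'" by (rule confl_Hom[OF assms(1)])
  then have "i \<in> Hom C A B" using Hom_unique[OF assms(2)] by blast
  then show ?thesis by (rule that)
qed

lemma adm_mono_comp_iso: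
  assumes "adm_mono C i" "i \<in> Hom C A B" "is_iso C u B B'"
  shows "adm_mono C (u \<odot> i)"
proof -
  obtain q where q: "(i, q) \<in> Confl C" using assms(1) unfolding adm_mono_def by blast
  obtain D where hq: "q \<in> Hom C B D" by (rule confl_Hom_epi[OF q assms(2)])
  obtain v where hu: "u \<in> Hom C B B'" and v: "v \<in> Hom C B' B" "v \<odot> u = Idm C B"
    using assms(3) unfolding is_iso_def by blast
  note H = in_HomD[OF assms(2)] in_HomD[OF hq] in_HomD[OF v(1)] in_HomD[OF hu]
  have "(u \<odot> i, q \<odot> v) \<in> Confl C"
  proof (rule confl_iso_closed[OF q assms(2) hq _ _ Idm_is_iso assms(3) Idm_is_iso])
    show "u \<odot> i \<in> Hom C A B'" "q \<odot> v \<in> Hom C B' D" using H by (simp_all add: in_HomI)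
    show "(u \<odot> i) \<odot> Idm C A = u \<odot> i" "(q \<odot> v) \<odot> u = Idm C D \<odot> q" using H by (simp_all add: v(2))
    show "A \<in> Obj C" "D \<in> Obj C" using H by simp_all
  qed
  then show ?thesis unfolding adm_mono_def by blast
qed

lemma confl_of_adm_mono_cokernel:
  assumes am: "adm_mono C i" and hi: "i \<in> Hom C A B" and hp: "p \<in> Hom C B D"
    and pi: "p \<odot> i = Zm C A D"
    and ex: "\<And>X f. X \<in> Obj C \<Longrightarrow> f \<in> Hom C B X \<Longrightarrow> f \<odot> i = Zm C A X \<Longrightarrow> \<exists>g\<in>Hom C D X. g \<odot> p = f"
    and uniq: "\<And>X g g'. g \<in> Hom C D X \<Longrightarrow> g' \<in> Hom C D X \<Longrightarrow> g \<odot> p = g' \<odot> p \<Longrightarrow> g = g'"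
  shows "(i, p) \<in> Confl C"
proof -
  obtain q where q: "(i, q) \<in> Confl C" using am unfolding adm_mono_def by blast
  obtain D' where hq: "q \<in> Hom C B D'" by (rule confl_Hom_epi[OF q hi])
  note K = confl_cokernel[OF q hi hq]
  have D: "D \<in> Obj C" "D' \<in> Obj C" using hp hq Hom_Obj by blast+
  obtain c where c: "c \<in> Hom C D' D" "c \<odot> q = p" using K(2)[OF D(1) hp pi] by blast
  obtain c' where c': "c' \<in> Hom C D D'" "c' \<odot> p = q" using ex[OF D(2) hq K(1)] by blast
  have "(c' \<odot> c) \<odot> q = Idm C D' \<odot> q" using c(1) c'(1) hq by (simp add: in_HomD c(2) c'(2))
  then have "c' \<odot> c = Idm C D'" by (rule K(3)[OF comp_in_Hom[OF c(1) c'(1)] Idm_in_Hom[OF D(2)]])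
  moreover have "(c \<odot> c') \<odot> p = Idm C D \<odot> p" using c(1) c'(1) hp by (simp add: in_HomD c(2) c'(2))
  then have "c \<odot> c' = Idm C D" by (rule uniq[OF comp_in_Hom[OF c'(1) c(1)] Idm_in_Hom[OF D(1)]])
  ultimately have iso: "is_iso C c D' D"
    unfolding is_iso_def using c(1) c'(1) by (intro conjI bexI[of _ c'])
  have "A \<in> Obj C" "B \<in> Obj C" using hi Hom_Obj by blast+
  then show ?thesis
    using confl_iso_closed[OF q hi hq hi hp Idm_is_iso Idm_is_iso iso] hi hp by (simp add: in_HomD c(2))
qed

text \<open>A pushout is determined up to isomorphism, so a pushout of an admissible monomorphism
  is isomorphic to the one provided by the axiom.\<close>
lemma adm_mono_of_pushout:
  assumes am: "adm_mono C i" and hi: "i \<in> Hom C A B" and hf: "f \<in> Hom C A A'"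
    and hj: "j \<in> Hom C A' B'" and hf': "f' \<in> Hom C B B'" and sq: "j \<odot> f = f' \<odot> i"
    and ex: "\<And>X g h. X \<in> Obj C \<Longrightarrow> g \<in> Hom C A' X \<Longrightarrow> h \<in> Hom C B X \<Longrightarrow> g \<odot> f = h \<odot> i \<Longrightarrow>
               \<exists>u\<in>Hom C B' X. u \<odot> j = g \<and> u \<odot> f' = h"
    and uniq: "\<And>X u u'. u \<in> Hom C B' X \<Longrightarrow> u' \<in> Hom C B' X \<Longrightarrow> u \<odot> j = u' \<odot> j \<Longrightarrow>
               u \<odot> f' = u' \<odot> f' \<Longrightarrow> u = u'"
  shows "adm_mono C j"
proof -
  obtain B'' i'' f'' where P: "i'' \<in> Hom C A' B''" "f'' \<in> Hom C B B''" "i'' \<odot> f = f'' \<odot> i" "adm_mono C i''"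
    and P_uniq: "\<And>X g h. X \<in> Obj C \<Longrightarrow> g \<in> Hom C A' X \<Longrightarrow> h \<in> Hom C B X \<Longrightarrow> g \<odot> f = h \<odot> i \<Longrightarrow>
           \<exists>!u. u \<in> Hom C B'' X \<and> u \<odot> i'' = g \<and> u \<odot> f'' = h"
    by (rule adm_mono_pushout_exists[OF hi am hf]) (rule that)
  have O: "B' \<in> Obj C" "B'' \<in> Obj C" using hj P Hom_Obj by blast+
  obtain u where u: "u \<in> Hom C B'' B'" "u \<odot> i'' = j" "u \<odot> f'' = f'"
    using P_uniq[OF O(1) hj hf' sq] by blast
  obtain v where v: "v \<in> Hom C B' B''" "v \<odot> j = i''" "v \<odot> f' = f''"
    using ex[OF O(2) P(1) P(2) P(3)] by blast
  have "(v \<odot> u) \<odot> i'' = i''" "(v \<odot> u) \<odot> f'' = f''"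
    using u(1) v(1) P(1,2) by (simp_all add: in_HomD u(2,3) v(2,3))
  moreover have "Idm C B'' \<odot> i'' = i''" "Idm C B'' \<odot> f'' = f''" using P by (simp_all add: in_HomD)
  ultimately have vu: "v \<odot> u = Idm C B''"
    using P_uniq[OF O(2) P(1) P(2) P(3)] comp_in_Hom[OF u(1) v(1)] Idm_in_Hom[OF O(2)] by metis
  have "(u \<odot> v) \<odot> j = Idm C B' \<odot> j" "(u \<odot> v) \<odot> f' = Idm C B' \<odot> f'"
    using u(1) v(1) hj hf' by (simp_all add: in_HomD u(2,3) v(2,3))
  then have uv: "u \<odot> v = Idm C B'" by (rule uniq[OF comp_in_Hom[OF v(1) u(1)] Idm_in_Hom[OF O(1)]])
  have "is_iso C u B'' B'" unfolding is_iso_def using u(1) v(1) uv vu by (intro conjI bexI[of _ v])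
  from adm_mono_comp_iso[OF P(4) P(1) this] show ?thesis unfolding u(2) .
qed

text \<open>The injection \<open>i1\<close> is the pushout of the admissible monomorphism \<open>0 \<rightarrow> B\<close>
  (the kernel of \<open>Idm C B\<close>) along \<open>0 \<rightarrow> A\<close>.\<close>
lemma biprod_confl:
  assumes b: "biprod A B S i1 i2 p1 p2"
  shows "(i1, p2) \<in> Confl C"
proof -
  note B = biprodD[OF b]
  obtain z where z: "(z, Idm C B) \<in> Confl C" using adm_epi_Idm[OF B(14)] unfolding adm_epi_def by blast
  obtain A0 where hz: "z \<in> Hom C A0 B" by (rule confl_Hom_mono[OF z Idm_in_Hom[OF B(14)]])
  have A0: "A0 \<in> Obj C" using hz Hom_Obj by blast
  have zz: "z = Zm C A0 B"
    using confl_cokernel(1)[OF z hz Idm_in_Hom[OF B(14)]] hz by (simp add: in_HomD)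
  have am: "adm_mono C i1"
  proof (rule adm_mono_of_pushout[OF _ hz Zm_in_Hom[OF A0 B(13)]])
    show "adm_mono C z" using z unfolding adm_mono_def by blast
    show "i1 \<in> Hom C A S" "i2 \<in> Hom C B S" using B by (simp_all add: in_HomI)
    show "i1 \<odot> Zm C A0 A = i2 \<odot> z" using B A0 by (simp add: zz)
    show "\<exists>u\<in>Hom C S X. u \<odot> i1 = g \<and> u \<odot> i2 = h"
      if "g \<in> Hom C A X" "h \<in> Hom C B X" for X g h
      using in_HomD[OF that(1)] in_HomD[OF that(2)] B
      by (intro bexI[of _ "g \<odot> p1 \<oplus> h \<odot> p2"]) (simp_all add: in_HomI biprod_proj_inj[OF b])
    show "u = u'" if "u \<in> Hom C S X" "u' \<in> Hom C S X" "u \<odot> i1 = u' \<odot> i1" "u \<odot> i2 = u' \<odot> i2"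
      for X u u'
      using biprod_out_eqI[OF b that] .
  qed
  show ?thesis
  proof (rule confl_of_adm_mono_cokernel[OF am])
    show "i1 \<in> Hom C A S" "p2 \<in> Hom C S B" "p2 \<odot> i1 = Zm C A B" using B by (simp_all add: in_HomI)
    fix X f assume f: "f \<in> Hom C S X" "f \<odot> i1 = Zm C A X"
    note F = in_HomD[OF f(1)]
    have "f \<odot> (i2 \<odot> p2) = f"
      by (rule biprod_out_eqI[OF b _ f(1)]) (use F f(2) B in \<open>simp_all add: in_HomI\<close>)
    then show "\<exists>g\<in>Hom C B X. g \<odot> p2 = f"
      using F B by (intro bexI[of _ "f \<odot> i2"]) (simp_all add: in_HomI)
  next
    fix X g g' assume g: "g \<in> Hom C B X" "g' \<in> Hom C B X" "g \<odot> p2 = g' \<odot> p2"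
    have "g = (g \<odot> p2) \<odot> i2" "g' = (g' \<odot> p2) \<odot> i2" using g(1,2) B by (simp_all add: in_HomD)
    then show "g = g'" using g(3) by simp
  qed
qed

lemma comp_reduce:
  "g \<odot> f = h \<Longrightarrow> arr x \<Longrightarrow> arr f \<Longrightarrow> arr g \<Longrightarrow> cod x = dom f \<Longrightarrow> dom g = cod f \<Longrightarrow>
   g \<odot> (f \<odot> x) = h \<odot> x"
  by (metis comp_assoc)

text \<open>\<open>i \<oplus> Idm C K\<close> is the pushout of \<open>i\<close> along the first injection \<open>A \<rightarrow> A \<oplus> K\<close>.\<close>
lemma adm_mono_biprod_map_Idm:
  assumes am: "adm_mono C i" and hi: "i \<in> Hom C A B"
    and ba: "biprod A K SA x1 x2 y1 y2" and bb: "biprod B K SB z1 z2 w1 w2"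
  shows "adm_mono C (z1 \<odot> i \<odot> y1 \<oplus> z2 \<odot> y2)"
proof -
  note BA = biprodD[OF ba] and BB = biprodD[OF bb] and I = in_HomD[OF hi]
  let ?M = "z1 \<odot> i \<odot> y1 \<oplus> z2 \<odot> y2"
  have hM: "?M \<in> Hom C SA SB" using BA BB I by (simp add: in_HomI)
  have Mx1: "?M \<odot> x1 = z1 \<odot> i" and Mx2: "?M \<odot> x2 = z2"
    using BA BB I by (simp_all add: biprod_proj_inj[OF ba])
  show ?thesis
  proof (rule adm_mono_of_pushout[OF am hi _ hM _ Mx1])
    show "x1 \<in> Hom C A SA" "z1 \<in> Hom C B SB" using BA BB by (simp_all add: in_HomI)
    fix X g h assume a: "X \<in> Obj C" "g \<in> Hom C SA X" "h \<in> Hom C B X" "g \<odot> x1 = h \<odot> i"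
    note G = in_HomD[OF a(2)] and H = in_HomD[OF a(3)]
    let ?u = "h \<odot> w1 \<oplus> g \<odot> x2 \<odot> w2"
    have hu: "?u \<in> Hom C SB X" using BA BB G H by (simp add: in_HomI)
    have u1: "?u \<odot> z1 = h" and u2: "?u \<odot> z2 = g \<odot> x2"
      using BA BB G H by (simp_all add: biprod_proj_inj[OF bb])
    have "?u \<odot> ?M = g"
    proof (rule biprod_out_eqI[OF ba _ a(2)])
      show "?u \<odot> ?M \<in> Hom C SA X" using hu hM comp_in_Hom by blast
      have "(?u \<odot> ?M) \<odot> x1 = ?u \<odot> (z1 \<odot> i)"
        using BA BB G H I Mx1 by (simp del: Add_comp_distrib comp_Add_distrib)
      also have "\<dots> = h \<odot> i" by (rule comp_reduce[OF u1]) (use BA BB G H I hu in simp_all)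
      finally show "(?u \<odot> ?M) \<odot> x1 = g \<odot> x1" using a(4) by simp
      have "(?u \<odot> ?M) \<odot> x2 = ?u \<odot> z2"
        using BA BB G H I Mx2 by (simp del: Add_comp_distrib comp_Add_distrib)
      then show "(?u \<odot> ?M) \<odot> x2 = g \<odot> x2" using u2 by simp
    qed
    then show "\<exists>u\<in>Hom C SB X. u \<odot> ?M = g \<and> u \<odot> z1 = h" using hu u1 by blast
  next
    fix X u u' assume a: "u \<in> Hom C SB X" "u' \<in> Hom C SB X" "u \<odot> ?M = u' \<odot> ?M" "u \<odot> z1 = u' \<odot> z1"
    have "u \<odot> z2 = (u \<odot> ?M) \<odot> x2" "u' \<odot> z2 = (u' \<odot> ?M) \<odot> x2"
      using BA in_HomD[OF a(1)] in_HomD[OF a(2)] in_HomD[OF hM]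
      by (simp_all del: Add_comp_distrib comp_Add_distrib add: Mx2)
    then have "u \<odot> z2 = u' \<odot> z2" using a(3) by simp
    then show "u = u'" by (rule biprod_out_eqI[OF bb a(1,2) a(4)])
  qed
qed

text \<open>\<open>i \<oplus> i'\<close> factors as \<open>(Idm \<oplus> i') \<circ> (i \<oplus> Idm)\<close> through \<open>B \<oplus> A'\<close>.\<close>
lemma adm_mono_biprod_map:
  assumes ami: "adm_mono C i" and hi: "i \<in> Hom C A B"
    and ami': "adm_mono C i'" and hi': "i' \<in> Hom C A' B'"
    and ba: "biprod A A' SA a1 a2 q1 q2" and bb: "biprod B B' SB b1 b2 r1 r2"
  shows "adm_mono C (b1 \<odot> i \<odot> q1 \<oplus> b2 \<odot> i' \<odot> q2)"
proof -
  note BA = biprodD[OF ba] and BB = biprodD[OF bb] and I = in_HomD[OF hi] in_HomD[OF hi']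
  obtain T t1 t2 u1 u2 where bt: "biprod B A' T t1 t2 u1 u2" using biprod_exists BB(13) BA(14) by blast
  note BT = biprodD[OF bt]
  have "adm_mono C ((b2 \<odot> i' \<odot> u2 \<oplus> b1 \<odot> u1) \<odot> (t1 \<odot> i \<odot> q1 \<oplus> t2 \<odot> q2))"
  proof (rule adm_mono_comp)
    show "adm_mono C (t1 \<odot> i \<odot> q1 \<oplus> t2 \<odot> q2)" by (rule adm_mono_biprod_map_Idm[OF ami hi ba bt])
    show "adm_mono C (b2 \<odot> i' \<odot> u2 \<oplus> b1 \<odot> u1)"
      by (rule adm_mono_biprod_map_Idm[OF ami' hi' biprod_swap[OF bt] biprod_swap[OF bb]])
    show "t1 \<odot> i \<odot> q1 \<oplus> t2 \<odot> q2 \<in> Hom C SA T" using BA BT I by (simp add: in_HomI)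
    show "b2 \<odot> i' \<odot> u2 \<oplus> b1 \<odot> u1 \<in> Hom C T SB" using BB BT I by (simp add: in_HomI)
  qed
  also have "(b2 \<odot> i' \<odot> u2 \<oplus> b1 \<odot> u1) \<odot> (t1 \<odot> i \<odot> q1 \<oplus> t2 \<odot> q2) = b1 \<odot> i \<odot> q1 \<oplus> b2 \<odot> i' \<odot> q2"
    using BA BB BT I by (simp add: biprod_proj_inj[OF bt] Add_ac)
  finally show ?thesis .
qed

context
  fixes i p i' p' A B D A' B' D' SA a1 a2 q1 q2 SB b1 b2 r1 r2 SD c1 c2 s1 s2
  assumes confl: "(i, p) \<in> Confl C" "(i', p') \<in> Confl C"
    and in_Hom: "i \<in> Hom C A B" "p \<in> Hom C B D" "i' \<in> Hom C A' B'" "p' \<in> Hom C B' D'"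
    and biprods: "biprod A A' SA a1 a2 q1 q2" "biprod B B' SB b1 b2 r1 r2" "biprod D D' SD c1 c2 s1 s2"
begin

lemma biprod_map_comp_zero:
  "(c1 \<odot> p \<odot> r1 \<oplus> c2 \<odot> p' \<odot> r2) \<odot> (b1 \<odot> i \<odot> q1 \<oplus> b2 \<odot> i' \<odot> q2) = Zm C SA SD"
proof -
  note I = in_HomD[OF in_Hom(1)] in_HomD[OF in_Hom(2)] in_HomD[OF in_Hom(3)] in_HomD[OF in_Hom(4)]
  have "p \<odot> (i \<odot> x) = Zm C (dom x) D" "p' \<odot> (i' \<odot> y) = Zm C (dom y) D'"
    if "arr x" "cod x = A" "arr y" "cod y = A'" for x y
    using that I
    by (simp_all add: comp_reduce[OF confl_cokernel(1)[OF confl(1) in_Hom(1,2)]]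
                      comp_reduce[OF confl_cokernel(1)[OF confl(2) in_Hom(3,4)]])
  then show ?thesis
    using biprodD[OF biprods(1)] biprodD[OF biprods(2)] biprodD[OF biprods(3)] I
    by (simp add: biprod_proj_inj[OF biprods(1)] biprod_proj_inj[OF biprods(2)]
                  biprod_proj_inj[OF biprods(3)])
qed

lemma biprod_map_cokernel:
  assumes X: "X \<in> Obj C" and f: "f \<in> Hom C SB X"
    and fM: "f \<odot> (b1 \<odot> i \<odot> q1 \<oplus> b2 \<odot> i' \<odot> q2) = Zm C SA X"
  shows "\<exists>g\<in>Hom C SD X. g \<odot> (c1 \<odot> p \<odot> r1 \<oplus> c2 \<odot> p' \<odot> r2) = f"
proof -
  note BA = biprodD[OF biprods(1)] and BB = biprodD[OF biprods(2)] and BD = biprodD[OF biprods(3)]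
  note I = in_HomD[OF in_Hom(1)] in_HomD[OF in_Hom(2)] in_HomD[OF in_Hom(3)] in_HomD[OF in_Hom(4)]
  note F = in_HomD[OF f]
  let ?M = "b1 \<odot> i \<odot> q1 \<oplus> b2 \<odot> i' \<odot> q2" and ?E = "c1 \<odot> p \<odot> r1 \<oplus> c2 \<odot> p' \<odot> r2"
  have "(f \<odot> b1) \<odot> i = (f \<odot> ?M) \<odot> a1" "(f \<odot> b2) \<odot> i' = (f \<odot> ?M) \<odot> a2"
    using F BA BB I by (simp_all add: biprod_proj_inj[OF biprods(1)])
  then have "(f \<odot> b1) \<odot> i = Zm C A X" "(f \<odot> b2) \<odot> i' = Zm C A' X" using X fM BA by simp_all
  moreover have "f \<odot> b1 \<in> Hom C B X" "f \<odot> b2 \<in> Hom C B' X" using F BB by (simp_all add: in_HomI)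
  ultimately obtain g1 g2 where g: "g1 \<in> Hom C D X" "g1 \<odot> p = f \<odot> b1" "g2 \<in> Hom C D' X" "g2 \<odot> p' = f \<odot> b2"
    using confl_cokernel(2)[OF confl(1) in_Hom(1,2) X] confl_cokernel(2)[OF confl(2) in_Hom(3,4) X] by metis
  note G = in_HomD[OF g(1)] in_HomD[OF g(3)]
  have "(g1 \<odot> s1 \<oplus> g2 \<odot> s2) \<odot> ?E = f"
  proof (rule biprod_out_eqI[OF biprods(2) _ f])
    show "(g1 \<odot> s1 \<oplus> g2 \<odot> s2) \<odot> ?E \<in> Hom C SB X" using G BD BB I by (simp add: in_HomI)
    show "((g1 \<odot> s1 \<oplus> g2 \<odot> s2) \<odot> ?E) \<odot> b1 = f \<odot> b1" "((g1 \<odot> s1 \<oplus> g2 \<odot> s2) \<odot> ?E) \<odot> b2 = f \<odot> b2"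
      using G BD BB I F
      by (simp_all add: biprod_proj_inj[OF biprods(2)] biprod_proj_inj[OF biprods(3)] flip: g(2,4))
  qed
  moreover have "g1 \<odot> s1 \<oplus> g2 \<odot> s2 \<in> Hom C SD X" using G BD by (simp add: in_HomI)
  ultimately show ?thesis by blast
qed

lemma biprod_map_cancel:
  assumes g: "g \<in> Hom C SD X" "g' \<in> Hom C SD X"
    and "g \<odot> (c1 \<odot> p \<odot> r1 \<oplus> c2 \<odot> p' \<odot> r2) = g' \<odot> (c1 \<odot> p \<odot> r1 \<oplus> c2 \<odot> p' \<odot> r2)"
  shows "g = g'"
proof (rule biprod_out_eqI[OF biprods(3) g])
  note BB = biprodD[OF biprods(2)] and BD = biprodD[OF biprods(3)]
  note I = in_HomD[OF in_Hom(2)] in_HomD[OF in_Hom(4)] and G = in_HomD[OF g(1)] in_HomD[OF g(2)]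
  let ?E = "c1 \<odot> p \<odot> r1 \<oplus> c2 \<odot> p' \<odot> r2"
  have "(g \<odot> c1) \<odot> p = (g \<odot> ?E) \<odot> b1" "(g' \<odot> c1) \<odot> p = (g' \<odot> ?E) \<odot> b1"
    "(g \<odot> c2) \<odot> p' = (g \<odot> ?E) \<odot> b2" "(g' \<odot> c2) \<odot> p' = (g' \<odot> ?E) \<odot> b2"
    using G BD BB I by (simp_all add: biprod_proj_inj[OF biprods(2)])
  then have "(g \<odot> c1) \<odot> p = (g' \<odot> c1) \<odot> p" "(g \<odot> c2) \<odot> p' = (g' \<odot> c2) \<odot> p'"
    using assms(3) by simp_all
  moreover have "g \<odot> c1 \<in> Hom C D X" "g' \<odot> c1 \<in> Hom C D X" "g \<odot> c2 \<in> Hom C D' X" "g' \<odot> c2 \<in> Hom C D' X"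
    using G BD by (simp_all add: in_HomI)
  ultimately show "g \<odot> c1 = g' \<odot> c1" "g \<odot> c2 = g' \<odot> c2"
    using confl_cokernel(3)[OF confl(1) in_Hom(1,2)] confl_cokernel(3)[OF confl(2) in_Hom(3,4)]
    by blast+
qed

lemma confl_biprod_map:
  "(b1 \<odot> i \<odot> q1 \<oplus> b2 \<odot> i' \<odot> q2, c1 \<odot> p \<odot> r1 \<oplus> c2 \<odot> p' \<odot> r2) \<in> Confl C"
proof (rule confl_of_adm_mono_cokernel[OF _ _ _ biprod_map_comp_zero biprod_map_cokernel biprod_map_cancel])
  note I = in_HomD[OF in_Hom(1)] in_HomD[OF in_Hom(2)] in_HomD[OF in_Hom(3)] in_HomD[OF in_Hom(4)]
  have "adm_mono C i" "adm_mono C i'" using confl unfolding adm_mono_def by blast+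
  then show "adm_mono C (b1 \<odot> i \<odot> q1 \<oplus> b2 \<odot> i' \<odot> q2)"
    using adm_mono_biprod_map in_Hom(1,3) biprods(1,2) by blast
  show "b1 \<odot> i \<odot> q1 \<oplus> b2 \<odot> i' \<odot> q2 \<in> Hom C SA SB" "c1 \<odot> p \<odot> r1 \<oplus> c2 \<odot> p' \<odot> r2 \<in> Hom C SB SD"
    using biprodD[OF biprods(1)] biprodD[OF biprods(2)] biprodD[OF biprods(3)] I
    by (simp_all add: in_HomI)
qed

end

lemma acyclic_biprod_map:
  assumes bS: "\<And>n. biprod (P n) (P' n) (S n) (i1 n) (i2 n) (p1 n) (p2 n)"
    and "acyclic C P d" and "acyclic C P' d'"
  shows "acyclic C S (\<lambda>n. i1 (n - 1) \<odot> d n \<odot> p1 n \<oplus> i2 (n - 1) \<odot> d' n \<odot> p2 n)"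
proof -
  obtain J e m where A: "\<And>n. J n \<in> Obj C" "\<And>n. e n \<in> Hom C (P n) (J (n - 1))"
    "\<And>n. m n \<in> Hom C (J n) (P n)" "\<And>n. d n = m (n - 1) \<odot> e n" "\<And>n. (m n, e n) \<in> Confl C"
    using assms(2) unfolding acyclic_def by blast
  obtain J' e' m' where A': "\<And>n. J' n \<in> Obj C" "\<And>n. e' n \<in> Hom C (P' n) (J' (n - 1))"
    "\<And>n. m' n \<in> Hom C (J' n) (P' n)" "\<And>n. d' n = m' (n - 1) \<odot> e' n" "\<And>n. (m' n, e' n) \<in> Confl C"
    using assms(3) unfolding acyclic_def by blast
  obtain T t1 t2 u1 u2 where bT: "\<And>n. biprod (J n) (J' n) (T n) (t1 n) (t2 n) (u1 n) (u2 n)"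
    using biprod_family_exists[of J J', OF A(1) A'(1)] by blast
  show ?thesis unfolding acyclic_def
  proof (intro exI allI conjI)
    fix n :: int
    note BT = biprodD[OF bT[of n]] biprodD[OF bT[of "n - 1"]]
      and BS = biprodD[OF bS[of n]] biprodD[OF bS[of "n - 1"]]
    note H = in_HomD[OF A(2)[of n]] in_HomD[OF A(3)[of n]] in_HomD[OF A(3)[of "n - 1"]]
      in_HomD[OF A'(2)[of n]] in_HomD[OF A'(3)[of n]] in_HomD[OF A'(3)[of "n - 1"]]
    show "T n \<in> Obj C" using BT by simp
    show "t1 (n - 1) \<odot> e n \<odot> p1 n \<oplus> t2 (n - 1) \<odot> e' n \<odot> p2 n \<in> Hom C (S n) (T (n - 1))"
      using BT BS H by (simp add: in_HomI)
    show "i1 n \<odot> m n \<odot> u1 n \<oplus> i2 n \<odot> m' n \<odot> u2 n \<in> Hom C (T n) (S n)"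
      using BT BS H by (simp add: in_HomI)
    show "i1 (n - 1) \<odot> d n \<odot> p1 n \<oplus> i2 (n - 1) \<odot> d' n \<odot> p2 n =
       (i1 (n - 1) \<odot> m (n - 1) \<odot> u1 (n - 1) \<oplus> i2 (n - 1) \<odot> m' (n - 1) \<odot> u2 (n - 1)) \<odot>
       (t1 (n - 1) \<odot> e n \<odot> p1 n \<oplus> t2 (n - 1) \<odot> e' n \<odot> p2 n)"
      using BT BS H by (simp add: A(4) A'(4) biprod_proj_inj[OF bT[of "n - 1"]])
    show "(i1 n \<odot> m n \<odot> u1 n \<oplus> i2 n \<odot> m' n \<odot> u2 n,
           t1 (n - 1) \<odot> e n \<odot> p1 n \<oplus> t2 (n - 1) \<odot> e' n \<odot> p2 n) \<in> Confl C"
      by (rule confl_biprod_map[OF A(5) A'(5) A(3) A(2) A'(3) A'(2) bT bS bT])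
  qed
qed

end

section \<open>The binary complex \<open>X \<oplus> sw X\<close>\<close>

lemma zspan_add: "a \<in> zspan R \<Longrightarrow> b \<in> zspan R \<Longrightarrow> (\<lambda>x. a x + b x) \<in> zspan R"
  using zspan_diff[of a R "\<lambda>x. 0 - b x"] zspan_diff[OF zspan_zero, of b R] by simp

locale doubled_graded_object = exact_cat C for C :: "('o, 'm) excat" +
  fixes P S :: "int \<Rightarrow> 'o" and i1 i2 p1 p2 :: "int \<Rightarrow> 'm"
  assumes biprod_family: "\<And>n. biprod (P n) (P n) (S n) (i1 n) (i2 n) (p1 n) (p2 n)"
begin

definition sum_diff :: "(int \<Rightarrow> 'm) \<Rightarrow> (int \<Rightarrow> 'm) \<Rightarrow> int \<Rightarrow> 'm" where
  "sum_diff f g n = i1 (n - 1) \<odot> f n \<odot> p1 n \<oplus> i2 (n - 1) \<odot> g n \<odot> p2 n"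

definition swap :: "int \<Rightarrow> 'm" where
  "swap n = i1 n \<odot> p2 n \<oplus> i2 n \<odot> p1 n"

definition swap_class :: "nat \<Rightarrow> ('o, 'm) bcx \<Rightarrow> int" where
  "swap_class k = (\<lambda>z. \<Sum>i\<in>{0..k}.
     (-1) ^ i * gen (bpair C (S (int i)) (S (int i)) (Idm C (S (int i))) (swap (int i))) z)"

lemmas biprod_familyD = biprodD[OF biprod_family]

lemma swap_in_Hom: "swap n \<in> Hom C (S n) (S n)"
  using biprod_familyD by (simp add: swap_def in_HomI)

lemma swap_swap: "swap n \<odot> swap n = Idm C (S n)"
  using biprod_familyD by (simp add: swap_def biprod_proj_inj[OF biprod_family] Add_ac)

context
  fixes f g :: "int \<Rightarrow> 'm"
  assumes f: "\<And>n. f n \<in> Hom C (P n) (P (n - 1))" and g: "\<And>n. g n \<in> Hom C (P n) (P (n - 1))"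
begin

lemma sum_diff_in_Hom: "sum_diff f g n \<in> Hom C (S n) (S (n - 1))"
  using biprod_familyD in_HomD[OF f] in_HomD[OF g] by (simp add: sum_diff_def in_HomI)

lemma chain_map_Idm_sum_diff: "chain_map C S (sum_diff f g) S (sum_diff f g) (\<lambda>n. Idm C (S n))"
  unfolding chain_map_def using biprod_familyD in_HomD[OF sum_diff_in_Hom] by (simp add: Idm_in_Hom)

lemma chain_map_swap: "chain_map C S (sum_diff f g) S (sum_diff g f) swap"
  unfolding chain_map_def
  using swap_in_Hom biprod_familyD in_HomD[OF f] in_HomD[OF g]
  by (simp add: sum_diff_def swap_def biprod_proj_inj[OF biprod_family] Add_ac)

lemma chain_map_inj1: "chain_map C P f S (sum_diff f g) i1"
  unfolding chain_map_def
  using biprod_familyD in_HomD[OF f] in_HomD[OF g]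
  by (simp add: sum_diff_def in_HomI biprod_proj_inj[OF biprod_family])

lemma chain_map_proj2: "chain_map C S (sum_diff f g) P g p2"
  unfolding chain_map_def
  using biprod_familyD in_HomD[OF f] in_HomD[OF g]
  by (simp add: sum_diff_def in_HomI biprod_proj_inj[OF biprod_family])

end

lemma is_bcx_sum:
  assumes "is_bcx C k (P, f, f')" "is_bcx C k (P, g, g')"
  shows "is_bcx C k (S, sum_diff f g, sum_diff f' g')"
proof -
  have hom: "\<And>n. f n \<in> Hom C (P n) (P (n - 1))" "\<And>n. f' n \<in> Hom C (P n) (P (n - 1))"
    "\<And>n. g n \<in> Hom C (P n) (P (n - 1))" "\<And>n. g' n \<in> Hom C (P n) (P (n - 1))"
    and acyc: "acyclic C P f" "acyclic C P f'" "acyclic C P g" "acyclic C P g'"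
    using assms unfolding is_bcx_def by simp_all
  have zero: "\<And>n. n < 0 \<or> n > int k \<Longrightarrow> zero_obj C (P n)"
    using assms(1) unfolding is_bcx_def by auto
  show ?thesis
    unfolding is_bcx_def prod.case
    using biprod_familyD sum_diff_in_Hom[OF hom(1,3)] sum_diff_in_Hom[OF hom(2,4)]
      zero_obj_biprod[OF biprod_family zero zero]
      acyclic_biprod_map[OF biprod_family acyc(1,3)] acyclic_biprod_map[OF biprod_family acyc(2,4)]
    by (simp add: sum_diff_def[abs_def])
qed

lemma rel_B_sum:
  assumes "is_bcx C k (P, f, f')" "is_bcx C k (P, g, g')"
  shows "(\<lambda>z. gen (S, sum_diff f g, sum_diff f' g') z - gen (P, f, f') z - gen (P, g, g') z) \<in> rel_B C k"
proof -
  have hom: "\<And>n. f n \<in> Hom C (P n) (P (n - 1))" "\<And>n. f' n \<in> Hom C (P n) (P (n - 1))"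
    "\<And>n. g n \<in> Hom C (P n) (P (n - 1))" "\<And>n. g' n \<in> Hom C (P n) (P (n - 1))"
    using assms unfolding is_bcx_def by simp_all
  have "bmor C (P, f, f') (S, sum_diff f g, sum_diff f' g') i1"
    "bmor C (S, sum_diff f g, sum_diff f' g') (P, g, g') p2"
    unfolding bmor_def prod.case
    using chain_map_inj1[OF hom(1,3)] chain_map_inj1[OF hom(2,4)]
      chain_map_proj2[OF hom(1,3)] chain_map_proj2[OF hom(2,4)] by simp_all
  moreover have "\<forall>n. (i1 n, p2 n) \<in> Confl C" using biprod_confl[OF biprod_family] by blast
  ultimately show ?thesis
    unfolding rel_B_def mem_Collect_eq using assms is_bcx_sum[OF assms]
    by (intro exI[of _ "(P, f, f')"] exI[of _ "(S, sum_diff f g, sum_diff f' g')"]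
        exI[of _ "(P, g, g')"] exI[of _ i1] exI[of _ p2]) simp
qed

lemma rel_L_swap:
  assumes hom: "\<And>n. f n \<in> Hom C (P n) (P (n - 1))" "\<And>n. g n \<in> Hom C (P n) (P (n - 1))"
    "\<And>n. f' n \<in> Hom C (P n) (P (n - 1))" "\<And>n. g' n \<in> Hom C (P n) (P (n - 1))"
    and "is_bcx C k (S, sum_diff f g, sum_diff f' g')" "is_bcx C k (S, sum_diff f g, sum_diff g' f')"
  shows "(\<lambda>z. gen (S, sum_diff f g, sum_diff g' f') z - gen (S, sum_diff f g, sum_diff f' g') z
            - swap_class k z) \<in> rel_L C k"
  unfolding rel_L_def swap_class_def mem_Collect_eq
  using assms(5,6) chain_map_Idm_sum_diff[OF hom(1,2)] chain_map_swap[OF hom(3,4)] swap_swap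
    biprod_familyD(15)
  by (intro exI[of _ S] exI[of _ "sum_diff f g"] exI[of _ "sum_diff f' g'"] exI[of _ "sum_diff f g"]
      exI[of _ "sum_diff g' f'"] exI[of _ "\<lambda>n. Idm C (S n)"] exI[of _ swap]) simp

lemma L1_eq_sum_swap_zero:
  assumes "is_bcx C k (P, d, d')"
  shows "L1_eq C k (gen (S, sum_diff d d', sum_diff d' d)) (\<lambda>_. 0)"
proof -
  let ?R = "rel_B C k \<union> rel_K C k \<union> rel_L C k"
  have hom: "\<And>n. d n \<in> Hom C (P n) (P (n - 1))" "\<And>n. d' n \<in> Hom C (P n) (P (n - 1))"
    using assms unfolding is_bcx_def by simp_all
  have sw: "is_bcx C k (P, d', d)" and dd: "is_bcx C k (P, d, d)" and d'd': "is_bcx C k (P, d', d')"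
    using assms unfolding is_bcx_def by simp_all
  have diag: "is_bcx C k (S, sum_diff d d', sum_diff d d')" by (rule is_bcx_sum[OF dd d'd'])
  have Y: "is_bcx C k (S, sum_diff d d, sum_diff d d)" by (rule is_bcx_sum[OF dd dd])
  let ?Q = "gen (S, sum_diff d d', sum_diff d' d)"
    and ?D = "gen (S, sum_diff d d', sum_diff d d')"
    and ?Y = "gen (S, sum_diff d d, sum_diff d d)"
  have ladder_Q: "(\<lambda>z. ?D z - ?Q z - swap_class k z) \<in> zspan ?R"
    using rel_L_swap[OF hom(1,2,2,1) is_bcx_sum[OF assms sw] diag] by (intro zspan_base UnI2)
  have ladder_Y: "(\<lambda>z. ?Y z - ?Y z - swap_class k z) \<in> zspan ?R"
    using rel_L_swap[OF hom(1,1,1,1) Y Y] by (intro zspan_base UnI2)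
  have diagonal: "?D \<in> zspan ?R"
    using diag unfolding rel_K_def diagonal_def by (intro zspan_base UnI1 UnI2) auto
  have "(\<lambda>z. (?D z - (?D z - ?Q z - swap_class k z)) + (?Y z - ?Y z - swap_class k z)) \<in> zspan ?R"
    by (rule zspan_add[OF zspan_diff[OF diagonal ladder_Q] ladder_Y])
  then show ?thesis unfolding L1_eq_def by simp
qed

end

theorem lemma3p2:
  fixes C :: "('o,'m) excat" and k :: nat and X :: "('o,'m) bcx"
  assumes "exact_category C" and "k \<ge> 1" and "is_bcx C k X"
  shows "L1_eq C k (gen (sw X)) (\<lambda>z. - gen X z)"
proof -
  interpret exact_cat C by unfold_locales (rule assms(1))
  obtain P d d' where X: "X = (P, d, d')" by (cases X)
  have bcx: "is_bcx C k (P, d, d')" "is_bcx C k (P, d', d)"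
    using assms(3) unfolding X is_bcx_def by simp_all
  have "\<And>n. P n \<in> Obj C" using bcx(1) unfolding is_bcx_def by simp
  then obtain S i1 i2 p1 p2 where "\<And>n. biprod (P n) (P n) (S n) (i1 n) (i2 n) (p1 n) (p2 n)"
    using biprod_family_exists[of P P] by metis
  then interpret doubled_graded_object C P S i1 i2 p1 p2 by unfold_locales
  let ?R = "rel_B C k \<union> rel_K C k \<union> rel_L C k"
  let ?Q = "gen (S, sum_diff d d', sum_diff d' d)"
  have "(\<lambda>z. ?Q z - 0) \<in> zspan ?R"
    using L1_eq_sum_swap_zero[OF bcx(1)] unfolding L1_eq_def .
  moreover have "(\<lambda>z. ?Q z - gen X z - gen (sw X) z) \<in> zspan ?R"
    using rel_B_sum[OF bcx] unfolding X sw_def prod.case by (intro zspan_base UnI1)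
  ultimately have "(\<lambda>z. (?Q z - 0) - (?Q z - gen X z - gen (sw X) z)) \<in> zspan ?R"
    by (rule zspan_diff)
  moreover have "(\<lambda>z. (?Q z - 0) - (?Q z - gen X z - gen (sw X) z)) = (\<lambda>z. gen (sw X) z - - gen X z)"
    by (simp add: fun_eq_iff)
  ultimately show ?thesis unfolding L1_eq_def by simp
qed

end
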